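(* For any graph $G$, $\chi_c(G,\pm)=2\chi_c(G)$.
   Context: Graphs are finite, may have multiple edges, no loops. A signed graph $(G,\sigma)$ is a graph $G$ with a signature $\sigma:E(G)\to\{+1,-1\}$. The digon graph $(G,\pm)$ has vertex set $V(G)$ and, for each pair $\{u,v\}$ forming an edge of $G$, both a positive edge $uv$ and a negative edge $uv$. For real $r\ge 2$, $C^r$ is the circle of circumference $r$, $d_{C^r}(x,y)=\min\{|x-y|,r-|x-y|\}$, $\overline{x}=x+r/2\pmod r$. A circular $r$-coloring of a signed graph is $f:V\to C^r$ with $d_{C^r}(f(u),f(v))\ge1$ for each positive edge $uv$ and $d_{C^r}(f(u),\overline{f(v)})\ge1$ for each negative edge $uv$; the signed circular chromatic number $\chi_c(G,\sigma)$ is the infimum of such $r\ge2$. For the unsigned graph $G$, a circular $r$-coloring requires $d_{C^r}(f(u),f(v))\ge1$ for every edge, and $\chi_c(G)$ is the infimum of such $r$. *)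

theory Defs
  imports Complex_Main
begin

definition multigraph :: "'a set \<Rightarrow> 'e set \<Rightarrow> ('e \<Rightarrow> 'a set) \<Rightarrow> bool" where
  "multigraph V E ends \<longleftrightarrow> finite V \<and> finite E \<and>
     (\<forall>e\<in>E. ends e \<subseteq> V \<and> card (ends e) = 2)"

text \<open>Circle C^r represented by the interval [0,r).\<close>
definition circ_dist :: "real \<Rightarrow> real \<Rightarrow> real \<Rightarrow> real" where
  "circ_dist r x y = min \<bar>x - y\<bar> (r - \<bar>x - y\<bar>)"

definition antipode :: "real \<Rightarrow> real \<Rightarrow> real" where
  "antipode r x = (if x + r / 2 < r then x + r / 2 else x - r / 2)"

text \<open>Signed graph: signature sigma with values in {1,-1}.\<close>
definition signed_circ_coloring ::
  "'a set \<Rightarrow> 'e set \<Rightarrow> ('e \<Rightarrow> 'a set) \<Rightarrow> ('e \<Rightarrow> int) \<Rightarrow> real \<Rightarrow> ('a \<Rightarrow> real) \<Rightarrow> bool" where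
  "signed_circ_coloring V E ends \<sigma> r f \<longleftrightarrow>
     (\<forall>v\<in>V. 0 \<le> f v \<and> f v < r) \<and>
     (\<forall>e\<in>E. \<forall>u v. ends e = {u, v} \<longrightarrow>
        (if \<sigma> e = 1 then circ_dist r (f u) (f v) \<ge> 1
         else circ_dist r (f u) (antipode r (f v)) \<ge> 1))"

definition signed_circ_chi ::
  "'a set \<Rightarrow> 'e set \<Rightarrow> ('e \<Rightarrow> 'a set) \<Rightarrow> ('e \<Rightarrow> int) \<Rightarrow> real" where
  "signed_circ_chi V E ends \<sigma> =
     Inf {r. r \<ge> 2 \<and> (\<exists>f. signed_circ_coloring V E ends \<sigma> r f)}"

definition circ_coloring ::
  "'a set \<Rightarrow> 'e set \<Rightarrow> ('e \<Rightarrow> 'a set) \<Rightarrow> real \<Rightarrow> ('a \<Rightarrow> real) \<Rightarrow> bool" where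
  "circ_coloring V E ends r f \<longleftrightarrow>
     (\<forall>v\<in>V. 0 \<le> f v \<and> f v < r) \<and>
     (\<forall>e\<in>E. \<forall>u v. ends e = {u, v} \<longrightarrow> circ_dist r (f u) (f v) \<ge> 1)"

definition circ_chi :: "'a set \<Rightarrow> 'e set \<Rightarrow> ('e \<Rightarrow> 'a set) \<Rightarrow> real" where
  "circ_chi V E ends = Inf {r. r \<ge> 1 \<and> (\<exists>f. circ_coloring V E ends r f)}"

text \<open>Digon graph (G,\<pm>): each edge e gives a positive edge (e,True) and a negative
  edge (e,False) with the same ends.\<close>
definition digon_edges :: "'e set \<Rightarrow> ('e \<times> bool) set" where
  "digon_edges E = E \<times> (UNIV :: bool set)"

definition digon_ends :: "('e \<Rightarrow> 'a set) \<Rightarrow> 'e \<times> bool \<Rightarrow> 'a set" where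
  "digon_ends ends p = ends (fst p)"

definition digon_sign :: "'e \<times> bool \<Rightarrow> int" where
  "digon_sign p = (if snd p then 1 else -1)"

end

theory Submission
  imports Defs
begin

text \<open>Folding \<open>C\<^sup>2\<^sup>s\<close> onto \<open>C\<^sup>s\<close> by \<open>x \<mapsto> x mod s\<close> identifies antipodal points, and the
  distance of two folded points is the smaller of the distances from \<open>x\<close> to \<open>y\<close> and to
  \<open>y\<close>'s antipode. A signed \<open>2s\<close>-colouring of \<open>(G,\<pm>)\<close> asks for exactly both of these
  distances to be at least 1, so it folds to a circular \<open>s\<close>-colouring of \<open>G\<close>; conversely
  an \<open>s\<close>-colouring of \<open>G\<close>, read on the larger circle \<open>C\<^sup>2\<^sup>s\<close>, is a signed \<open>2s\<close>-colouring.
  The sets of admissible circumferences thus differ by the factor 2, and so do their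
  infima.\<close>

definition fold_circle :: "real \<Rightarrow> real \<Rightarrow> real" where
  "fold_circle s x = (if x < s then x else x - s)"

lemma circ_dist_fold_circle:
  assumes "0 \<le> x" "x < 2 * s" "0 \<le> y" "y < 2 * s"
  shows "circ_dist s (fold_circle s x) (fold_circle s y)
         = min (circ_dist (2 * s) x y) (circ_dist (2 * s) x (antipode (2 * s) y))"
  using assms unfolding circ_dist_def antipode_def fold_circle_def
  by (auto simp: abs_if min_def split: if_splits)

lemma signed_circ_coloring_digon_iff:
  "signed_circ_coloring V (digon_edges E) (digon_ends ends) digon_sign r f \<longleftrightarrow>
   (\<forall>v\<in>V. 0 \<le> f v \<and> f v < r) \<and>
   (\<forall>e\<in>E. \<forall>u v. ends e = {u, v} \<longrightarrow>
      1 \<le> min (circ_dist r (f u) (f v)) (circ_dist r (f u) (antipode r (f v))))"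
  unfolding signed_circ_coloring_def digon_edges_def digon_ends_def digon_sign_def
  by (force split: if_splits)

lemma signed_circ_coloring_digon_fold:
  assumes ends: "\<forall>e\<in>E. ends e \<subseteq> V"
    and f: "signed_circ_coloring V (digon_edges E) (digon_ends ends) digon_sign (2 * s) f"
  shows "circ_coloring V E ends s (fold_circle s \<circ> f)"
  unfolding circ_coloring_def
proof (intro conjI ballI allI impI)
  fix v assume "v \<in> V"
  then show "0 \<le> (fold_circle s \<circ> f) v" "(fold_circle s \<circ> f) v < s"
    using f unfolding signed_circ_coloring_digon_iff fold_circle_def by auto
next
  fix e u v assume "e \<in> E" "ends e = {u, v}"
  moreover from this have "u \<in> V" "v \<in> V" using ends by auto
  ultimately show "1 \<le> circ_dist s ((fold_circle s \<circ> f) u) ((fold_circle s \<circ> f) v)"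
    using f unfolding signed_circ_coloring_digon_iff by (simp add: circ_dist_fold_circle)
qed

lemma circ_coloring_imp_signed_digon:
  assumes ends: "\<forall>e\<in>E. ends e \<subseteq> V"
    and g: "circ_coloring V E ends s g"
  shows "signed_circ_coloring V (digon_edges E) (digon_ends ends) digon_sign (2 * s) g"
  unfolding signed_circ_coloring_digon_iff
proof (intro conjI ballI allI impI)
  fix v assume "v \<in> V"
  then show "0 \<le> g v" "g v < 2 * s"
    using g unfolding circ_coloring_def by force+
next
  fix e u v assume e: "e \<in> E" "ends e = {u, v}"
  then have "0 \<le> g u" "g u < s" "0 \<le> g v" "g v < s"
    using g ends unfolding circ_coloring_def by blast+
  then have "circ_dist s (g u) (g v)
             = min (circ_dist (2 * s) (g u) (g v)) (circ_dist (2 * s) (g u) (antipode (2 * s) (g v)))"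
    using circ_dist_fold_circle[of "g u" s "g v"] by (simp add: fold_circle_def)
  with e g show "1 \<le> min (circ_dist (2 * s) (g u) (g v))
                        (circ_dist (2 * s) (g u) (antipode (2 * s) (g v)))"
    unfolding circ_coloring_def by metis
qed

lemma signed_digon_circumferences:
  assumes "\<forall>e\<in>E. ends e \<subseteq> V"
  shows "{r. r \<ge> 2 \<and> (\<exists>f. signed_circ_coloring V (digon_edges E) (digon_ends ends) digon_sign r f)}
         = (*) 2 ` {s. s \<ge> 1 \<and> (\<exists>g. circ_coloring V E ends s g)}"
proof (intro set_eqI iffI)
  fix r assume "r \<in> {r. r \<ge> 2 \<and> (\<exists>f. signed_circ_coloring V (digon_edges E) (digon_ends ends) digon_sign r f)}"
  then obtain f where "r \<ge> 2" "signed_circ_coloring V (digon_edges E) (digon_ends ends) digon_sign r f"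
    by blast
  moreover from this have "circ_coloring V E ends (r / 2) (fold_circle (r / 2) \<circ> f)"
    using signed_circ_coloring_digon_fold[OF assms, of "r / 2" f] by simp
  ultimately show "r \<in> (*) 2 ` {s. s \<ge> 1 \<and> (\<exists>g. circ_coloring V E ends s g)}"
    by (intro image_eqI[of _ _ "r / 2"]) auto
qed (use circ_coloring_imp_signed_digon[OF assms] in auto)

lemma multigraph_circ_coloring_exists:
  assumes "multigraph V E ends"
  shows "\<exists>g. circ_coloring V E ends (real (card V) + 1) g"
proof -
  obtain h where h: "bij_betw h V {0..<card V}"
    using assms ex_bij_betw_finite_nat unfolding multigraph_def by blast
  have "circ_coloring V E ends (real (card V) + 1) (real \<circ> h)"
    unfolding circ_coloring_def
  proof (intro conjI ballI allI impI)
    fix v assume "v \<in> V"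
    then show "0 \<le> (real \<circ> h) v" "(real \<circ> h) v < real (card V) + 1"
      using h by (auto dest: bij_betw_apply)
  next
    fix e u v assume e: "e \<in> E" "ends e = {u, v}"
    then have "u \<noteq> v" "u \<in> V" "v \<in> V"
      using assms unfolding multigraph_def by (auto simp: card_2_iff doubleton_eq_iff)
    then have "h u \<noteq> h v" "h u < card V" "h v < card V"
      using h by (auto simp: bij_betw_def inj_on_def)
    then show "1 \<le> circ_dist (real (card V) + 1) ((real \<circ> h) u) ((real \<circ> h) v)"
      unfolding circ_dist_def by (auto simp: abs_if)
  qed
  then show ?thesis by blast
qed

lemma double_Inf:
  fixes S :: "real set"
  assumes "S \<noteq> {}" "bdd_below S"
  shows "2 * Inf S = Inf ((*) 2 ` S)"
  using assms by (intro continuous_at_Inf_mono) (auto intro: monoI continuous_intros)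

theorem lemma6:
  fixes V :: "'a set" and E :: "'e set" and ends :: "'e \<Rightarrow> 'a set"
  assumes "multigraph V E ends"
  shows "signed_circ_chi V (digon_edges E) (digon_ends ends) digon_sign
           = 2 * circ_chi V E ends"
proof -
  define S where "S = {s. s \<ge> 1 \<and> (\<exists>g. circ_coloring V E ends s g)}"
  have "S \<noteq> {}" \<comment> \<open>the infimum of the empty set of reals is unspecified\<close>
    using multigraph_circ_coloring_exists[OF assms] unfolding S_def by force
  moreover have "bdd_below S"
    unfolding S_def by (auto intro: bdd_belowI)
  moreover have "\<forall>e\<in>E. ends e \<subseteq> V"
    using assms unfolding multigraph_def by blast
  ultimately show ?thesis
    unfolding signed_circ_chi_def circ_chi_def S_def[symmetric]
    by (simp add: signed_digon_circumferences double_Inf S_def)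
qed

end
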